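(* Let $G$ be a locally compact group with a compact open normal subgroup $A$ such that $G/A$ is isomorphic to an infinite subgroup of the (discrete) group $\mathbb{Q}$ of rational numbers. Then $G$ contains a discrete subgroup $H\cong G/A$ such that $G=AH$ and $A\cap H=\{1\}$, so that $G$ is the semidirect product $A\rtimes H$. *)

theory Defs
  imports "HOL-Analysis.Analysis" "HOL-Algebra.Algebra"
begin

definition topological_group :: "('a, 'b) monoid_scheme \<Rightarrow> 'a topology \<Rightarrow> bool" where
  "topological_group G T \<longleftrightarrow>
     group G \<and> topspace T = carrier G \<and>
     continuous_map (prod_topology T T) T (\<lambda>(x, y). x \<otimes>\<^bsub>G\<^esub> y) \<and>
     continuous_map T T (\<lambda>x. inv\<^bsub>G\<^esub> x)"

definition locally_compact_group :: "('a, 'b) monoid_scheme \<Rightarrow> 'a topology \<Rightarrow> bool" where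
  "locally_compact_group G T \<longleftrightarrow>
     topological_group G T \<and> Hausdorff_space T \<and> locally_compact_space T"

definition rat_add_group :: "rat monoid" where
  "rat_add_group = \<lparr>carrier = UNIV, monoid.mult = (+), one = 0\<rparr>"

end

theory Submission
  imports Defs
begin

text \<open>Compose the quotient map with \<open>G/A \<cong> S \<le> \<rat>\<close> to get an epimorphism
  \<open>p : G \<rightarrow> S\<close> with kernel \<open>A\<close>; its fibres are cosets of \<open>A\<close>, hence compact. A homomorphic
  section of \<open>p\<close> is a point of the compact product \<open>\<Prod>s\<in>S. p\<^sup>-\<^sup>1(s)\<close> lying in all the closed
  sets \<open>{\<sigma>. \<sigma>(s + t) = \<sigma>(s) \<sigma>(t)}\<close>. These sets have the finite intersection property
  because finitely generated subgroups of \<open>\<rat>\<close> are cyclic: on the multiples of a generator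
  \<open>q\<close> put \<open>\<sigma>(n q) = g\<^sup>n\<close> for a lift \<open>g\<close> of \<open>q\<close>. The image \<open>H\<close> of such a section is a
  complement of \<open>A\<close>, and it is discrete because the open set \<open>A\<close> meets it only in \<open>1\<close>.\<close>

lemma group_rat_add_group: "group rat_add_group"
proof (rule groupI)
  show "\<exists>y\<in>carrier rat_add_group. y \<otimes>\<^bsub>rat_add_group\<^esub> x = \<one>\<^bsub>rat_add_group\<^esub>" for x
    by (auto simp: rat_add_group_def intro: exI[of _ "- x"])
qed (auto simp: rat_add_group_def)

lemma inv_rat_add_group [simp]: "inv\<^bsub>rat_add_group\<^esub> x = - x"
  by (rule group.inv_equality[OF group_rat_add_group]) (auto simp: rat_add_group_def)

lemma int_pow_rat_add_group [simp]: "x [^]\<^bsub>rat_add_group\<^esub> (n::int) = of_int n * x"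
proof -
  have nat_pow: "x [^]\<^bsub>rat_add_group\<^esub> (m::nat) = of_nat m * x" for m
    by (induction m) (auto simp: rat_add_group_def distrib_right)
  show ?thesis
    by (cases "n < 0") (auto simp: int_pow_def2 nat_pow)
qed

lemma rat_subgroup_closed:
  assumes "subgroup S rat_add_group"
  shows "0 \<in> S" "x \<in> S \<Longrightarrow> y \<in> S \<Longrightarrow> x + y \<in> S" "x \<in> S \<Longrightarrow> of_int n * x \<in> S"
proof -
  interpret subgroup S rat_add_group by (rule assms)
  show "0 \<in> S" using one_closed by (simp add: rat_add_group_def)
  show "x \<in> S \<Longrightarrow> y \<in> S \<Longrightarrow> x + y \<in> S" using m_closed by (simp add: rat_add_group_def)
  show "x \<in> S \<Longrightarrow> of_int n * x \<in> S"
    using group.subgroup_int_pow_closed[OF group_rat_add_group assms] by simp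
qed

lemma rat_subgroup_common_divisor:
  assumes S: "subgroup S rat_add_group" and "x \<in> S" "y \<in> S"
  shows "\<exists>q\<in>S. (\<exists>m::int. x = of_int m * q) \<and> (\<exists>n::int. y = of_int n * q)"
proof -
  obtain a b :: int and d :: int where "d > 0" and xy: "x = of_int a / of_int d" "y = of_int b / of_int d"
  proof -
    obtain a1 d1 where x: "quotient_of x = (a1, d1)" by (cases "quotient_of x")
    obtain b1 d2 where y: "quotient_of y = (b1, d2)" by (cases "quotient_of y")
    have "d1 > 0" "d2 > 0" using quotient_of_denom_pos[OF x] quotient_of_denom_pos[OF y] .
    moreover have "x = of_int (a1 * d2) / of_int (d1 * d2)" "y = of_int (b1 * d1) / of_int (d1 * d2)"
      using quotient_of_div[OF x] quotient_of_div[OF y] \<open>d1 > 0\<close> \<open>d2 > 0\<close> by simp_all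
    ultimately show thesis using that[where d="d1 * d2" and a="a1 * d2" and b="b1 * d1"] by simp
  qed
  obtain u v where uv: "u * a + v * b = gcd a b" using bezout_int by blast
  define q where "q = of_int (gcd a b) / (of_int d :: rat)"
  have "q = of_int u * x + of_int v * y"
    unfolding q_def xy uv[symmetric] by (simp add: add_divide_distrib)
  then have "q \<in> S" using assms by (simp add: rat_subgroup_closed[OF S])
  have multiple: "of_int c / of_int d = of_int (c div gcd a b) * q" if "gcd a b dvd c" for c
    using that unfolding q_def by (metis dvd_div_mult_self of_int_mult times_divide_eq_right)
  have "x = of_int (a div gcd a b) * q" "y = of_int (b div gcd a b) * q"
    unfolding xy by (simp_all add: multiple)
  with \<open>q \<in> S\<close> show ?thesis by blast
qed

lemma rat_subgroup_locally_cyclic: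
  assumes S: "subgroup S rat_add_group" and "finite F" "F \<subseteq> S"
  shows "\<exists>q\<in>S. \<forall>s\<in>F. \<exists>n::int. s = of_int n * q"
  using assms(2,3)
proof (induction F rule: finite_induct)
  case empty
  then show ?case using rat_subgroup_closed(1)[OF S] by blast
next
  case (insert x F)
  then obtain q where q: "q \<in> S" "\<forall>s\<in>F. \<exists>n::int. s = of_int n * q" by auto
  have "x \<in> S" using insert.prems by simp
  then obtain q' m n where q': "q' \<in> S" "q = of_int m * q'" "x = of_int n * q'"
    using rat_subgroup_common_divisor[OF S q(1)] by blast
  have "\<exists>k::int. s = of_int k * q'" if "s \<in> F" for s
  proof -
    from q(2) \<open>s \<in> F\<close> obtain k where "s = of_int k * q" by blast
    then have "s = of_int (k * m) * q'" using q'(2) by simp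
    then show ?thesis ..
  qed
  then show ?case using q'(1,3) by (intro bexI[of _ q']) auto
qed

lemma continuous_map_group_mult:
  fixes G (structure)
  assumes "topological_group G T" "continuous_map Z T f" "continuous_map Z T g"
  shows "continuous_map Z T (\<lambda>x. f x \<otimes> g x)"
proof -
  have "continuous_map Z T ((\<lambda>(x, y). x \<otimes> y) \<circ> (\<lambda>x. (f x, g x)))"
    using assms by (intro continuous_map_compose[OF continuous_map_pairedI])
      (auto simp: topological_group_def)
  then show ?thesis by (simp add: o_def)
qed

lemma continuous_map_group_r_translation:
  fixes G (structure)
  assumes "topological_group G T" "a \<in> carrier G"
  shows "continuous_map T T (\<lambda>x. x \<otimes> a)"
  using assms by (intro continuous_map_group_mult continuous_map_id[unfolded id_def])
    (auto simp: topological_group_def)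

lemma compactin_r_coset:
  fixes G (structure)
  assumes "topological_group G T" "compactin T K" "a \<in> carrier G"
  shows "compactin T (K #> a)"
proof -
  have "K #> a = (\<lambda>x. x \<otimes> a) ` K" by (auto simp: r_coset_def)
  then show ?thesis
    using image_compactin[OF assms(2) continuous_map_group_r_translation[OF assms(1,3)]] by simp
qed

lemma subtopology_subgroup_eq_discrete:
  fixes G (structure)
  assumes tg: "topological_group G T" and H: "subgroup H G"
    and U: "openin T U" "U \<inter> H = {\<one>}"
  shows "subtopology T H = discrete_topology H"
proof -
  interpret group G using tg by (simp add: topological_group_def)
  have top: "topspace T = carrier G" using tg by (simp add: topological_group_def)
  have HG: "H \<subseteq> carrier G" using subgroup.subset[OF H] .
  have "openin (subtopology T H) {h}" if h: "h \<in> H" for h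
  proof -
    have hG: "h \<in> carrier G" using h HG by blast
    define V where "V = {x \<in> topspace T. x \<otimes> inv h \<in> U}"
    have "openin T V"
      unfolding V_def using hG
      by (intro openin_continuous_map_preimage[OF _ U(1)] continuous_map_group_r_translation[OF tg])
        simp
    moreover have "V \<inter> H = {h}"
    proof
      show "V \<inter> H \<subseteq> {h}"
      proof
        fix x assume x: "x \<in> V \<inter> H"
        then have xG: "x \<in> carrier G" using HG by blast
        have "x \<otimes> inv h \<in> H"
          using x subgroup.m_closed[OF H _ subgroup.m_inv_closed[OF H h]] by blast
        with x have "x \<otimes> inv h = \<one>" using U(2) unfolding V_def by blast
        then have "x = h" using inv_equality[of x "inv h"] xG hG by simp
        then show "x \<in> {h}" by simp
      qed
      have "\<one> \<in> U" using U(2) by blast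
      then show "{h} \<subseteq> V \<inter> H" using h hG top unfolding V_def by simp
    qed
    ultimately show ?thesis unfolding openin_subtopology by blast
  qed
  moreover have "topspace (subtopology T H) = H" using top HG by auto
  ultimately have "discrete_topology H = subtopology T H"
    unfolding discrete_topology_unique by blast
  then show ?thesis ..
qed

lemma (in group_hom) fibre_eq_kernel_r_coset:
  assumes x: "x \<in> carrier G"
  shows "{y \<in> carrier G. h y = h x} = kernel G H h #> x"
proof
  show "{y \<in> carrier G. h y = h x} \<subseteq> kernel G H h #> x"
  proof
    fix y assume y: "y \<in> {y \<in> carrier G. h y = h x}"
    then have "y \<otimes> inv x \<in> kernel G H h" using x by (auto simp: kernel_def)
    moreover have "y = (y \<otimes> inv x) \<otimes> x" using x y by (simp add: G.m_assoc)
    ultimately show "y \<in> kernel G H h #> x" unfolding r_coset_def by blast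
  qed
  show "kernel G H h #> x \<subseteq> {y \<in> carrier G. h y = h x}"
    using x by (auto simp: r_coset_def kernel_def)
qed

lemma (in normal) iso_FactGroup_projection:
  assumes \<phi>: "\<phi> \<in> iso (G Mod H) R" and R: "group R"
  shows "(\<lambda>x. \<phi> (H #> x)) \<in> hom G R"
    and "(\<lambda>x. \<phi> (H #> x)) ` carrier G = carrier R"
    and "kernel G R (\<lambda>x. \<phi> (H #> x)) = H"
proof -
  have hom: "\<phi> \<in> hom (G Mod H) R" and bij: "bij_betw \<phi> (rcosets H) (carrier R)"
    using \<phi> by (auto simp: iso_def FactGroup_def)
  have "compose (carrier G) \<phi> (\<lambda>x. H #> x) \<in> hom G R"
    using hom_compose[OF r_coset_hom_Mod hom] .
  then show "(\<lambda>x. \<phi> (H #> x)) \<in> hom G R"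
    by (auto simp: hom_def compose_def Pi_def)
  have "rcosets H = (\<lambda>x. H #> x) ` carrier G" by (auto simp: RCOSETS_def)
  with bij show "(\<lambda>x. \<phi> (H #> x)) ` carrier G = carrier R"
    by (metis bij_betw_def image_image)
  have \<phi>H: "\<phi> H = \<one>\<^bsub>R\<^esub>"
    using hom_one[OF hom factorgroup_is_group R] by (simp add: FactGroup_def)
  have "\<phi> (H #> x) = \<one>\<^bsub>R\<^esub> \<longleftrightarrow> x \<in> H" if x: "x \<in> carrier G" for x
  proof -
    have "H #> x \<in> rcosets H" using x by (auto simp: RCOSETS_def)
    moreover have "H \<in> rcosets H" using subgroup_in_rcosets[OF is_group] .
    ultimately have "\<phi> (H #> x) = \<one>\<^bsub>R\<^esub> \<longleftrightarrow> H #> x = H"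
      using bij \<phi>H unfolding bij_betw_def inj_on_def by metis
    also have "\<dots> \<longleftrightarrow> x \<in> H"
      using rcos_const[OF is_group] rcos_self[OF x subgroup_axioms] by metis
    finally show ?thesis .
  qed
  then show "kernel G R (\<lambda>x. \<phi> (H #> x)) = H"
    using subset by (auto simp: kernel_def)
qed

lemma section_image_complement:
  assumes G: "group G" and R: "group R" and p: "p \<in> hom G R" and \<sigma>: "\<sigma> \<in> hom R G"
    and sec: "\<And>r. r \<in> carrier R \<Longrightarrow> p (\<sigma> r) = r"
  shows "subgroup (\<sigma> ` carrier R) G"
    and "kernel G R p <#>\<^bsub>G\<^esub> \<sigma> ` carrier R = carrier G"
    and "kernel G R p \<inter> \<sigma> ` carrier R = {\<one>\<^bsub>G\<^esub>}"
    and "G\<lparr>carrier := \<sigma> ` carrier R\<rparr> \<cong> R"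
proof -
  interpret p: group_hom G R p using G R p by (simp add: group_hom_def group_hom_axioms_def)
  interpret \<sigma>: group_hom R G \<sigma> using G R \<sigma> by (simp add: group_hom_def group_hom_axioms_def)
  show "subgroup (\<sigma> ` carrier R) G" by (rule \<sigma>.img_is_subgroup)
  show "kernel G R p <#>\<^bsub>G\<^esub> \<sigma> ` carrier R = carrier G"
  proof
    show "kernel G R p <#>\<^bsub>G\<^esub> \<sigma> ` carrier R \<subseteq> carrier G"
      by (auto simp: set_mult_def kernel_def)
    show "carrier G \<subseteq> kernel G R p <#>\<^bsub>G\<^esub> \<sigma> ` carrier R"
    proof
      fix x assume x: "x \<in> carrier G"
      define s where "s = \<sigma> (p x)"
      have s: "s \<in> carrier G" "p s = p x" using x sec by (simp_all add: s_def)
      have "x \<otimes>\<^bsub>G\<^esub> inv\<^bsub>G\<^esub> s \<in> kernel G R p" using x s by (simp add: kernel_def)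
      moreover have "x = (x \<otimes>\<^bsub>G\<^esub> inv\<^bsub>G\<^esub> s) \<otimes>\<^bsub>G\<^esub> s" using x s by (simp add: p.G.m_assoc)
      moreover have "s \<in> \<sigma> ` carrier R" using x by (simp add: s_def)
      ultimately show "x \<in> kernel G R p <#>\<^bsub>G\<^esub> \<sigma> ` carrier R"
        unfolding set_mult_def by blast
    qed
  qed
  show "kernel G R p \<inter> \<sigma> ` carrier R = {\<one>\<^bsub>G\<^esub>}"
  proof
    show "kernel G R p \<inter> \<sigma> ` carrier R \<subseteq> {\<one>\<^bsub>G\<^esub>}"
      using sec by (auto simp: kernel_def)
    show "{\<one>\<^bsub>G\<^esub>} \<subseteq> kernel G R p \<inter> \<sigma> ` carrier R"
      using \<sigma>.hom_one by (auto simp: kernel_def intro!: image_eqI[of _ _ "\<one>\<^bsub>R\<^esub>"])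
  qed
  have "inj_on \<sigma> (carrier R)" using sec by (metis inj_on_inverseI)
  then have "\<sigma> \<in> iso R (G\<lparr>carrier := \<sigma> ` carrier R\<rparr>)"
    using \<sigma> by (auto simp: iso_def hom_def bij_betw_def)
  then show "G\<lparr>carrier := \<sigma> ` carrier R\<rparr> \<cong> R"
    using group.iso_sym[OF R] by (auto simp: is_iso_def)
qed

lemma finite_partial_hom_section:
  fixes G (structure)
  assumes G: "group G" and S: "subgroup S rat_add_group"
    and p: "p \<in> hom G rat_add_group" "p ` carrier G = S"
    and P: "finite P" "P \<subseteq> S \<times> S"
  shows "\<exists>\<sigma> \<in> (\<Pi>\<^sub>E s\<in>S. {x \<in> carrier G. p x = s}). \<forall>(s, t)\<in>P. \<sigma> (s + t) = \<sigma> s \<otimes> \<sigma> t"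
proof -
  interpret group G by (rule G)
  have p_pow: "p (x [^] k) = of_int k * p x" if "x \<in> carrier G" for x and k :: int
    using hom_int_pow[OF p(1) that G group_rat_add_group] by simp
  define F where "F = fst ` P \<union> snd ` P \<union> (\<lambda>(s, t). s + t) ` P"
  have F: "finite F" "F \<subseteq> S" using P rat_subgroup_closed(2)[OF S] by (auto simp: F_def)
  then obtain q where q: "q \<in> S" "\<forall>s\<in>F. \<exists>k::int. s = of_int k * q"
    using rat_subgroup_locally_cyclic[OF S] by blast
  \<comment> \<open>for \<open>q = 0\<close> the lift must be \<open>\<one>\<close>, so that \<open>g [^] k\<close> depends only on \<open>k * q\<close>\<close>
  define g where "g = (if q = 0 then \<one> else inv_into (carrier G) p q)"
  have g: "g \<in> carrier G" "p g = q"
    using q(1) p hom_one[OF p(1) G group_rat_add_group]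
    by (auto simp: g_def rat_add_group_def inv_into_into f_inv_into_f)
  have g_pow_eq: "g [^] k = g [^] l" if "of_int k * q = of_int l * q" for k l :: int
  proof (cases "q = 0")
    case True
    then show ?thesis by (simp add: g_def)
  next
    case False
    with that have "k = l" by simp
    then show ?thesis by simp
  qed
  define \<sigma> where "\<sigma> = (\<lambda>s\<in>S. if s \<in> F then g [^] (SOME k::int. s = of_int k * q)
                                 else inv_into (carrier G) p s)"
  have \<sigma>_F: "\<sigma> s = g [^] k" if s: "s \<in> F" "s = of_int k * q" for s k
  proof -
    have "\<exists>k::int. s = of_int k * q" using q(2) s(1) by blast
    then have "s = of_int (SOME k::int. s = of_int k * q) * q" by (rule someI_ex)
    then have "g [^] (SOME k::int. s = of_int k * q) = g [^] k"
      using g_pow_eq s(2) by metis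
    then show ?thesis using s(1) F(2) by (auto simp: \<sigma>_def)
  qed
  have "\<sigma> \<in> (\<Pi>\<^sub>E s\<in>S. {x \<in> carrier G. p x = s})"
  proof
    fix s assume s: "s \<in> S"
    show "\<sigma> s \<in> {x \<in> carrier G. p x = s}"
    proof (cases "s \<in> F")
      case True
      then obtain k where "s = of_int k * q" using q(2) by blast
      then show ?thesis using True g \<sigma>_F p_pow by simp
    next
      case False
      then show ?thesis using s p(2) by (auto simp: \<sigma>_def inv_into_into f_inv_into_f)
    qed
  qed (simp add: \<sigma>_def)
  moreover have "\<sigma> (s + t) = \<sigma> s \<otimes> \<sigma> t" if st: "(s, t) \<in> P" for s t
  proof -
    have "s \<in> F" "t \<in> F" "s + t \<in> F" using st by (force simp: F_def)+
    then obtain k l where kl: "s = of_int k * q" "t = of_int l * q" using q(2) by meson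
    have "\<sigma> (s + t) = g [^] (k + l)"
      by (rule \<sigma>_F[OF \<open>s + t \<in> F\<close>]) (simp add: kl distrib_right)
    moreover have "\<sigma> s = g [^] k" "\<sigma> t = g [^] l"
      using \<sigma>_F \<open>s \<in> F\<close> \<open>t \<in> F\<close> kl by simp_all
    ultimately show ?thesis using g(1) by (simp add: int_pow_mult)
  qed
  ultimately show ?thesis by blast
qed

lemma exists_hom_section_compact_kernel:
  fixes G (structure)
  assumes tg: "topological_group G T" and Haus: "Hausdorff_space T"
    and S: "subgroup S rat_add_group"
    and p: "p \<in> hom G (rat_add_group\<lparr>carrier := S\<rparr>)" "p ` carrier G = S"
    and K: "compactin T (kernel G (rat_add_group\<lparr>carrier := S\<rparr>) p)"
  shows "\<exists>\<sigma> \<in> hom (rat_add_group\<lparr>carrier := S\<rparr>) G. \<forall>s\<in>S. p (\<sigma> s) = s"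
proof -
  interpret group G using tg by (simp add: topological_group_def)
  have top: "topspace T = carrier G" using tg by (simp add: topological_group_def)
  have p_rat: "p \<in> hom G rat_add_group" using p(1) by (auto simp: hom_def rat_add_group_def)
  interpret p: group_hom G "rat_add_group\<lparr>carrier := S\<rparr>" p
    using p(1) subgroup.subgroup_is_group[OF S group_rat_add_group]
    by (simp add: group_hom_def group_hom_axioms_def is_group)
  define fibre where "fibre s = {x \<in> carrier G. p x = s}" for s
  have fibre_compact: "compactin T (fibre s)" if s: "s \<in> S" for s
  proof -
    obtain x where x: "x \<in> carrier G" "p x = s" using s p(2) by blast
    have "fibre s = kernel G (rat_add_group\<lparr>carrier := S\<rparr>) p #> x"
      using p.fibre_eq_kernel_r_coset[OF x(1)] x(2) by (simp add: fibre_def)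
    then show ?thesis using compactin_r_coset[OF tg K x(1)] by simp
  qed
  define Y where "Y = product_topology (\<lambda>s. subtopology T (fibre s)) S"
  have topY: "topspace Y = (\<Pi>\<^sub>E s\<in>S. fibre s)"
    using top by (auto simp: Y_def fibre_def topspace_product_topology)
  have "compact_space Y"
    unfolding Y_def compact_space_product_topology
    using fibre_compact compact_space_subtopology by blast
  define C where "C = (\<lambda>(s, t). {\<sigma> \<in> topspace Y. \<sigma> (s + t) = \<sigma> s \<otimes> \<sigma> t})"
  have closed: "closedin Y D" if "D \<in> C ` (S \<times> S)" for D
  proof -
    obtain s t where st: "D = C (s, t)" "s \<in> S" "t \<in> S" using \<open>D \<in> C ` (S \<times> S)\<close> by blast
    have "continuous_map Y T (\<lambda>\<sigma>. \<sigma> r)" if "r \<in> S" for r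
      unfolding Y_def
      by (rule continuous_map_into_fulltopology[OF continuous_map_product_projection[OF that]])
    then show ?thesis
      using st rat_subgroup_closed(2)[OF S st(2,3)] unfolding C_def
      by (simp add: closedin_continuous_maps_eq[OF Haus] continuous_map_group_mult[OF tg])
  qed
  have fip: "\<Inter>\<F> \<noteq> {}" if \<F>: "finite \<F>" "\<F> \<subseteq> C ` (S \<times> S)" for \<F>
  proof -
    obtain P where P: "P \<subseteq> S \<times> S" "finite P" "\<F> = C ` P"
      using \<F> by (meson finite_subset_image)
    then obtain \<sigma> where "\<sigma> \<in> (\<Pi>\<^sub>E s\<in>S. fibre s)" "\<forall>(s, t)\<in>P. \<sigma> (s + t) = \<sigma> s \<otimes> \<sigma> t"
      using finite_partial_hom_section[OF is_group S p_rat p(2)] unfolding fibre_def by blast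
    then have "\<sigma> \<in> \<Inter>\<F>" using P(3) topY by (auto simp: C_def)
    then show ?thesis by blast
  qed
  have "\<Inter>(C ` (S \<times> S)) \<noteq> {}"
    using \<open>compact_space Y\<close> closed fip unfolding compact_space_fip by blast
  then obtain \<sigma> where \<sigma>: "\<sigma> \<in> \<Inter>(C ` (S \<times> S))" by blast
  have "0 \<in> S" using rat_subgroup_closed(1)[OF S] .
  then have "\<sigma> \<in> topspace Y" using \<sigma> by (auto simp: C_def)
  then have "\<sigma> s \<in> carrier G \<and> p (\<sigma> s) = s" if "s \<in> S" for s
    using that topY by (auto simp: fibre_def)
  moreover have "\<sigma> (s + t) = \<sigma> s \<otimes> \<sigma> t" if "s \<in> S" "t \<in> S" for s t
    using \<sigma> that by (auto simp: C_def)
  ultimately show ?thesis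
    by (intro bexI[of _ \<sigma>]) (auto simp: hom_def rat_add_group_def)
qed

theorem theorem4p6:
  fixes G :: "('a, 'b) monoid_scheme" and T :: "'a topology" and A :: "'a set"
  assumes "locally_compact_group G T"
    and "A \<lhd> G" and "compactin T A" and "openin T A"
    and "\<exists>S. subgroup S rat_add_group \<and> infinite S \<and>
              G Mod A \<cong> rat_add_group\<lparr>carrier := S\<rparr>"
  shows "\<exists>H. subgroup H G \<and> subtopology T H = discrete_topology H \<and>
             G\<lparr>carrier := H\<rparr> \<cong> G Mod A \<and>
             A <#>\<^bsub>G\<^esub> H = carrier G \<and> A \<inter> H = {\<one>\<^bsub>G\<^esub>}"
proof -
  have tg: "topological_group G T" and Haus: "Hausdorff_space T"
    using assms(1) by (auto simp: locally_compact_group_def)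
  interpret A: normal A G by (rule assms(2))
  obtain S \<phi> where S: "subgroup S rat_add_group"
    and \<phi>: "\<phi> \<in> iso (G Mod A) (rat_add_group\<lparr>carrier := S\<rparr>)"
    using assms(5) unfolding is_iso_def by blast
  define R where "R = rat_add_group\<lparr>carrier := S\<rparr>"
  have R: "group R" unfolding R_def using subgroup.subgroup_is_group[OF S group_rat_add_group] .
  define p where "p = (\<lambda>x. \<phi> (A #>\<^bsub>G\<^esub> x))"
  have p: "p \<in> hom G R" "p ` carrier G = S" "kernel G R p = A"
    using A.iso_FactGroup_projection[OF \<phi>[folded R_def] R] by (simp_all add: p_def R_def)
  then obtain \<sigma> where \<sigma>: "\<sigma> \<in> hom R G" "\<And>s. s \<in> S \<Longrightarrow> p (\<sigma> s) = s"
    using exists_hom_section_compact_kernel[OF tg Haus S] assms(3) unfolding R_def by blast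
  have H: "subgroup (\<sigma> ` S) G" "A <#>\<^bsub>G\<^esub> \<sigma> ` S = carrier G" "A \<inter> \<sigma> ` S = {\<one>\<^bsub>G\<^esub>}"
    "G\<lparr>carrier := \<sigma> ` S\<rparr> \<cong> R"
    using section_image_complement[OF A.is_group R p(1) \<sigma>(1)] \<sigma>(2) p(3)
    by (simp_all add: R_def)
  moreover have "subtopology T (\<sigma> ` S) = discrete_topology (\<sigma> ` S)"
    using subtopology_subgroup_eq_discrete[OF tg H(1) assms(4) H(3)] .
  moreover have "R \<cong> G Mod A"
    using group.iso_sym[OF A.factorgroup_is_group] \<phi> by (auto simp: is_iso_def R_def)
  ultimately show ?thesis using iso_trans by blast
qed

end
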